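(* Consider the TGSS iteration with data $y^\delta$, $\|y^\delta-y\|\le\delta$, $\delta>0$. Let $k\in\mathbb N_0$ with $\|r_k^\delta\|>\frac{1+\eta}{1-\eta}\delta$. Then $z_k^\delta\in H_>(u_k^\delta,\alpha_k^\delta+\xi_k^\delta)$. If moreover $z_i^\delta\in B_{4\rho}(x_0)$ for all $i\in I_k$ and $z\in B_{4\rho}(x_0)$ satisfies $F(z)=y$, then $u_k^\delta\ne0$, $x_{k+1}^\delta$ is well defined, and $$\|z-x_{k+1}^\delta\|^2\le\|z-z_k^\delta\|^2-\left(\frac{\|r_k^\delta\|\big(\|r_k^\delta\|-\delta-\eta(\|r_k^\delta\|+\delta)\big)}{\|u_k^\delta\|}\right)^2 .$$
   Context: Setting: $\mathcal X,\mathcal Y$ are real Hilbert spaces, $F:\mathcal D(F)\subset\mathcal X\to\mathcal Y$ is continuously Fréchet differentiable with derivative $F'(x)\in\mathcal L(\mathcal X,\mathcal Y)$ and Hilbert-space adjoint $F'(x)^*$; $x_0\in\mathcal X$ and $\rho>0$ satisfy $B_{4\rho}(x_0)\subset\mathcal D(F)$, where $B_r(x)$ is the closed ball of radius $r$ about $x$. Standing assumptions: (A1) $F(x)=y$ has a solution $x_*\in B_\rho(x_0)$; (A2) there is $\eta\in(0,1)$ with $\|F(x)-F(\tilde x)-F'(x)(x-\tilde x)\|\le\eta\|F(x)-F(\tilde x)\|$ for all $x,\tilde x\in B_{4\rho}(x_0)$; (A3) $0<\|F'(x)\|\le c_F$ for all $x\in B_{4\rho}(x_0)$. Data: $y^\delta\in\mathcal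 Y$ with $\|y^\delta-y\|\le\delta$, $\delta\ge0$ ($\delta=0$ means $y^\delta=y$). Notation: for $u\in\mathcal X$, $a\in\mathbb R$, $\xi\ge0$: $H(u,a)=\{x:\langle u,x\rangle=a\}$, $H_>(u,a)=\{x:\langle u,x\rangle>a\}$, $H(u,a,\xi)=\{x:|\langle u,x\rangle-a|\le\xi\}$. $P_C$ is the metric projection onto a nonempty closed convex set $C$. TGSS iteration (for data $y^\delta$, iterates carry superscript $\delta$): fix an integer $K\ge1$; set $x_{-1}^\delta=x_0^\delta=x_0$. For $k=0,1,2,\dots$: choose $\lambda_k^\delta\in[0,1]$ with $\lambda_0^\delta=0$, put $z_k^\delta=x_k^\delta+\lambda_k^\delta(x_k^\delta-x_{k-1}^\delta)$, $r_k^\delta=F(z_k^\delta)-y^\delta$, $u_k^\delta=F'(z_k^\delta)^*r_k^\delta$, $\alpha_k^\delta=\langle u_k^\delta,z_k^\delta\rangle-\|r_k^\delta\|^2$, $\xi_k^\delta=(\delta+\eta(\|r_k^\delta\|+\delta))\|r_k^\delta\|$, $H_k^\delta=H(u_k^\delta,\alpha_k^\delta,\xi_k^\delta)$. Choose a finite index set $I_k\subset\{k-K,\dots,k\}\cap\mathbb N_0$ with $k\in I_k$, written $I_k=\{k_1>\dots>k_s\}$, $k_1=k$; set $p_1=P_{H^\delta_{k_1}}(z_k^\delta)$, $p_j=P_{H^\delta_{k_1}\cap\dots\cap H^\delta_{k_j}}(p_{j-1})$ for $j=2,\dots,s$, and $x_{k+1}^\delta=p_s$. *)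

theory Defs
  imports "HOL-Analysis.Analysis"
begin

definition hyperplane :: "'a::real_inner \<Rightarrow> real \<Rightarrow> 'a set" where
  "hyperplane u a = {x. inner u x = a}"

definition halfspace_gt :: "'a::real_inner \<Rightarrow> real \<Rightarrow> 'a set" where
  "halfspace_gt u a = {x. inner u x > a}"

definition stripe :: "'a::real_inner \<Rightarrow> real \<Rightarrow> real \<Rightarrow> 'a set" where
  "stripe u a \<xi> = {x. \<bar>inner u x - a\<bar> \<le> \<xi>}"

text \<open>Metric projection onto a set C (the unique nearest point when C is nonempty,
  closed and convex in a Hilbert space).\<close>
definition is_metric_proj :: "'a::real_inner set \<Rightarrow> 'a \<Rightarrow> 'a \<Rightarrow> bool" where
  "is_metric_proj C a p \<longleftrightarrow> p \<in> C \<and> (\<forall>q\<in>C. dist a p \<le> dist a q)"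

definition metric_proj :: "'a::real_inner set \<Rightarrow> 'a \<Rightarrow> 'a" where
  "metric_proj C a = (SOME p. is_metric_proj C a p)"

text \<open>Quantities of the TGSS iteration. The sequence of iterates is indexed by nat;
  x_{-1} = x_0 is realised by the truncated subtraction k - 1 for k = 0.\<close>
definition tgss_z :: "(nat \<Rightarrow> 'a::real_vector) \<Rightarrow> (nat \<Rightarrow> real) \<Rightarrow> nat \<Rightarrow> 'a" where
  "tgss_z x lam k = x k + lam k *\<^sub>R (x k - x (k - 1))"

definition tgss_r :: "('a \<Rightarrow> 'b::real_normed_vector) \<Rightarrow> 'b \<Rightarrow> (nat \<Rightarrow> 'a::real_vector)
    \<Rightarrow> (nat \<Rightarrow> real) \<Rightarrow> nat \<Rightarrow> 'b" where
  "tgss_r F yd x lam k = F (tgss_z x lam k) - yd"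

text \<open>Fadj x is the Hilbert-space adjoint of F'(x).\<close>
definition tgss_u :: "('a \<Rightarrow> 'b \<Rightarrow> 'a) \<Rightarrow> ('a \<Rightarrow> 'b::real_normed_vector) \<Rightarrow> 'b
    \<Rightarrow> (nat \<Rightarrow> 'a::real_vector) \<Rightarrow> (nat \<Rightarrow> real) \<Rightarrow> nat \<Rightarrow> 'a" where
  "tgss_u Fadj F yd x lam k = Fadj (tgss_z x lam k) (tgss_r F yd x lam k)"

definition tgss_alpha :: "('a \<Rightarrow> 'b \<Rightarrow> 'a) \<Rightarrow> ('a \<Rightarrow> 'b::real_normed_vector) \<Rightarrow> 'b
    \<Rightarrow> (nat \<Rightarrow> 'a::real_inner) \<Rightarrow> (nat \<Rightarrow> real) \<Rightarrow> nat \<Rightarrow> real" where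
  "tgss_alpha Fadj F yd x lam k =
     inner (tgss_u Fadj F yd x lam k) (tgss_z x lam k) - (norm (tgss_r F yd x lam k))\<^sup>2"

definition tgss_xi :: "real \<Rightarrow> real \<Rightarrow> ('a \<Rightarrow> 'b::real_normed_vector) \<Rightarrow> 'b
    \<Rightarrow> (nat \<Rightarrow> 'a::real_vector) \<Rightarrow> (nat \<Rightarrow> real) \<Rightarrow> nat \<Rightarrow> real" where
  "tgss_xi \<delta> \<eta> F yd x lam k =
     (\<delta> + \<eta> * (norm (tgss_r F yd x lam k) + \<delta>)) * norm (tgss_r F yd x lam k)"

definition tgss_H :: "real \<Rightarrow> real \<Rightarrow> ('a \<Rightarrow> 'b \<Rightarrow> 'a) \<Rightarrow> ('a \<Rightarrow> 'b::real_normed_vector) \<Rightarrow> 'b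
    \<Rightarrow> (nat \<Rightarrow> 'a::real_inner) \<Rightarrow> (nat \<Rightarrow> real) \<Rightarrow> nat \<Rightarrow> 'a set" where
  "tgss_H \<delta> \<eta> Fadj F yd x lam k =
     stripe (tgss_u Fadj F yd x lam k) (tgss_alpha Fadj F yd x lam k) (tgss_xi \<delta> \<eta> F yd x lam k)"

text \<open>The stripes used in step k, listed in the order k_1 > k_2 > ... > k_s
  of the index set I_k.\<close>
definition tgss_stripes :: "real \<Rightarrow> real \<Rightarrow> ('a \<Rightarrow> 'b \<Rightarrow> 'a) \<Rightarrow> ('a \<Rightarrow> 'b::real_normed_vector)
    \<Rightarrow> 'b \<Rightarrow> (nat \<Rightarrow> 'a::real_inner) \<Rightarrow> (nat \<Rightarrow> real) \<Rightarrow> nat set \<Rightarrow> 'a set list" where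
  "tgss_stripes \<delta> \<eta> Fadj F yd x lam Ik =
     map (tgss_H \<delta> \<eta> Fadj F yd x lam) (rev (sorted_list_of_set Ik))"

fun pseq :: "'a::real_inner set list \<Rightarrow> 'a \<Rightarrow> nat \<Rightarrow> 'a" where
  "pseq Hs z 0 = z"
| "pseq Hs z (Suc j) = metric_proj (\<Inter>i\<le>j. Hs ! i) (pseq Hs z j)"

end

theory Submission
  imports Defs
begin

text \<open>The solution \<open>z\<close> lies in every stripe \<open>H\<^sub>i\<close>, \<open>i \<in> I\<^sub>k\<close>: by the adjoint identity and the
  tangential cone condition, \<open>\<bar>\<langle>u\<^sub>i, z\<rangle> - \<alpha>\<^sub>i\<bar> \<le> \<xi>\<^sub>i\<close>. The stripes are closed and convex, so each
  successive projection is nonexpansive towards \<open>z\<close>, and the first one, onto \<open>H\<^sub>k\<close>, satisfies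
  \<open>\<parallel>z - p\<^sub>1\<parallel>\<^sup>2 + \<parallel>z\<^sub>k - p\<^sub>1\<parallel>\<^sup>2 \<le> \<parallel>z - z\<^sub>k\<parallel>\<^sup>2\<close>. The discrepancy bound
  \<open>\<parallel>r\<^sub>k\<parallel> > (1 + \<eta>) / (1 - \<eta>) \<delta>\<close> makes \<open>g = \<parallel>r\<^sub>k\<parallel> (\<parallel>r\<^sub>k\<parallel> - \<delta> - \<eta> (\<parallel>r\<^sub>k\<parallel> + \<delta>))\<close> positive, and
  \<open>\<langle>u\<^sub>k, z\<^sub>k\<rangle> = \<alpha>\<^sub>k + \<xi>\<^sub>k + g\<close>; since \<open>p\<^sub>1 \<in> H\<^sub>k\<close>, Cauchy-Schwarz gives \<open>u\<^sub>k \<noteq> 0\<close> and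
  \<open>\<parallel>z\<^sub>k - p\<^sub>1\<parallel> \<ge> g / \<parallel>u\<^sub>k\<parallel>\<close>.\<close>

lemma parallelogram_bound_in_convex:
  fixes C :: "'a::real_inner set"
  assumes "convex C" "p \<in> C" "q \<in> C" and d: "\<And>w. w \<in> C \<Longrightarrow> d \<le> dist a w" "0 \<le> d"
  shows "(norm (p - q))\<^sup>2 \<le> 2 * (dist a p)\<^sup>2 + 2 * (dist a q)\<^sup>2 - 4 * d\<^sup>2"
proof -
  have "(1/2) *\<^sub>R p + (1/2) *\<^sub>R q \<in> C"
    using assms(1-3) unfolding convex_def by (metis add_divide_distrib field_sum_of_halves
        le_divide_eq_1_pos less_eq_real_def one_le_numeral zero_le_divide_1_iff zero_less_numeral)
  then have "d\<^sup>2 \<le> (norm (a - (1/2) *\<^sub>R (p + q)))\<^sup>2"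
    using d by (intro power_mono) (auto simp: dist_norm scaleR_add_right)
  moreover have "(norm (p - q))\<^sup>2 = 2 * (norm (a - p))\<^sup>2 + 2 * (norm (a - q))\<^sup>2
                   - 4 * (norm (a - (1/2) *\<^sub>R (p + q)))\<^sup>2"
    unfolding power2_norm_eq_inner
    by (simp add: inner_diff_left inner_diff_right inner_add_left inner_add_right inner_commute algebra_simps)
  ultimately show ?thesis by (simp add: dist_norm)
qed

lemma minimising_sequence_Cauchy:
  fixes C :: "'a::real_inner set"
  assumes "convex C" and qC: "\<And>n. q n \<in> C" and qd: "\<And>n. (dist a (q n))\<^sup>2 < d\<^sup>2 + 1 / real (Suc n)"
    and d: "\<And>w. w \<in> C \<Longrightarrow> d \<le> dist a w" "0 \<le> d"
  shows "Cauchy q"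
proof -
  have close: "(norm (q m - q n))\<^sup>2 < 4 / real (Suc N)" if "N \<le> m" "N \<le> n" for m n N
  proof -
    have "1 / real (Suc m) \<le> 1 / real (Suc N)" "1 / real (Suc n) \<le> 1 / real (Suc N)"
      using that by (auto simp: frac_le)
    moreover have "(norm (q m - q n))\<^sup>2 \<le> 2 * (dist a (q m))\<^sup>2 + 2 * (dist a (q n))\<^sup>2 - 4 * d\<^sup>2"
      using parallelogram_bound_in_convex[OF assms(1) qC qC] d by blast
    ultimately show ?thesis using qd[of m] qd[of n] by linarith
  qed
  show "Cauchy q"
  proof (rule CauchyI)
    fix e :: real assume "0 < e"
    then obtain N where N: "inverse (real (Suc N)) < e\<^sup>2 / 4"
      using reals_Archimedean[of "e\<^sup>2 / 4"] by auto
    then have "4 / real (Suc N) < e\<^sup>2" by (simp add: field_simps)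
    then have "(norm (q m - q n))\<^sup>2 < e\<^sup>2" if "N \<le> m" "N \<le> n" for m n
      using close[OF that] by linarith
    then show "\<exists>M. \<forall>m\<ge>M. \<forall>n\<ge>M. norm (q m - q n) < e"
      using \<open>0 < e\<close> by (meson less_imp_le power2_less_imp_less)
  qed
qed

lemma metric_proj_exists:
  fixes C :: "'a::{real_inner,complete_space} set"
  assumes "closed C" "convex C" "C \<noteq> {}"
  shows "\<exists>p. is_metric_proj C a p"
proof -
  define d where "d = infdist a C"
  have d: "\<And>w. w \<in> C \<Longrightarrow> d \<le> dist a w" "0 \<le> d"
    unfolding d_def by (auto intro: infdist_le infdist_nonneg)
  have "\<exists>q\<in>C. (dist a q)\<^sup>2 < d\<^sup>2 + 1 / real (Suc n)" for n
  proof -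
    have "d < sqrt (d\<^sup>2 + 1 / real (Suc n))" by (intro real_less_rsqrt) simp
    then obtain q where "q \<in> C" "dist a q < sqrt (d\<^sup>2 + 1 / real (Suc n))"
      using assms(3) cINF_less_iff[of C "dist a"] by (auto simp: d_def infdist_notempty)
    then have "(dist a q)\<^sup>2 < (sqrt (d\<^sup>2 + 1 / real (Suc n)))\<^sup>2"
      by (intro power_strict_mono) auto
    with \<open>q \<in> C\<close> show ?thesis by auto
  qed
  then obtain q where qC: "\<And>n. q n \<in> C" and qd: "\<And>n. (dist a (q n))\<^sup>2 < d\<^sup>2 + 1 / real (Suc n)"
    by metis
  then have "Cauchy q" using assms(2) d by (intro minimising_sequence_Cauchy)
  then obtain l where l: "q \<longlonglongrightarrow> l" using Cauchy_convergent convergent_def by blast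
  have "l \<in> C" using assms(1) l qC closed_sequentially by blast
  have bound: "(dist a (q n))\<^sup>2 \<le> d\<^sup>2 + 1 / real (Suc n)" for n
    using qd[of n] by linarith
  have lim: "(\<lambda>n. (dist a (q n))\<^sup>2) \<longlonglongrightarrow> (dist a l)\<^sup>2" using l by (intro tendsto_intros)
  have "(\<lambda>n. d\<^sup>2 + 1 / real (Suc n)) \<longlonglongrightarrow> d\<^sup>2 + 0"
    by (intro tendsto_intros LIMSEQ_Suc[OF lim_inverse_n'[unfolded inverse_eq_divide]])
  from LIMSEQ_le[OF lim this] bound have "(dist a l)\<^sup>2 \<le> d\<^sup>2" by auto
  then have "dist a l \<le> d" using d(2) by (rule power2_le_imp_le)
  then show ?thesis
    using \<open>l \<in> C\<close> d(1) unfolding is_metric_proj_def by force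
qed

lemma is_metric_proj_metric_proj:
  fixes C :: "'a::{real_inner,complete_space} set"
  assumes "closed C" "convex C" "C \<noteq> {}"
  shows "is_metric_proj C a (metric_proj C a)"
  unfolding metric_proj_def using metric_proj_exists[OF assms] by (rule someI_ex)

lemma is_metric_proj_obtuse:
  fixes C :: "'a::real_inner set"
  assumes P: "is_metric_proj C a p" and "convex C" "q \<in> C"
  shows "inner (a - p) (q - p) \<le> 0"
proof (rule ccontr)
  assume "\<not> ?thesis"
  then have v: "inner (a - p) (q - p) > 0" by simp
  then have n: "(norm (q - p))\<^sup>2 > 0" by auto
  define t where "t = min 1 (inner (a - p) (q - p) / (norm (q - p))\<^sup>2)"
  have t: "0 < t" "t \<le> 1" "t * (norm (q - p))\<^sup>2 \<le> inner (a - p) (q - p)"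
    using v n by (auto simp: t_def min_def field_simps)
  have "(1 - t) *\<^sub>R p + t *\<^sub>R q \<in> C"
    using assms t P unfolding convex_def is_metric_proj_def by auto
  then have "norm (a - p) \<le> norm (a - (p + t *\<^sub>R (q - p)))"
    using P by (auto simp: is_metric_proj_def dist_norm algebra_simps)
  then have "(norm (a - p))\<^sup>2 \<le> (norm (a - (p + t *\<^sub>R (q - p))))\<^sup>2" by (intro power_mono) auto
  also have "\<dots> = (norm (a - p))\<^sup>2 - t * (2 * inner (a - p) (q - p) - t * (norm (q - p))\<^sup>2)"
    unfolding power2_norm_eq_inner
    by (simp add: inner_diff_left inner_diff_right inner_add_left inner_add_right inner_commute algebra_simps)
  finally have "2 * inner (a - p) (q - p) \<le> t * (norm (q - p))\<^sup>2"
    using t(1) by (simp add: mult_le_0_iff)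
  then show False using t(3) v by linarith
qed

lemma is_metric_proj_pythagoras_le:
  fixes C :: "'a::real_inner set"
  assumes "is_metric_proj C a p" "convex C" "q \<in> C"
  shows "(norm (q - p))\<^sup>2 + (norm (a - p))\<^sup>2 \<le> (norm (q - a))\<^sup>2"
proof -
  have "(norm (q - a))\<^sup>2 = (norm (q - p))\<^sup>2 - 2 * inner (a - p) (q - p) + (norm (a - p))\<^sup>2"
    unfolding power2_norm_eq_inner
    by (simp add: inner_diff_left inner_diff_right inner_commute algebra_simps)
  then show ?thesis using is_metric_proj_obtuse[OF assms] by linarith
qed

lemma closed_stripe: "closed (stripe u a \<xi>)"
  unfolding stripe_def by (intro closed_Collect_le continuous_intros)

lemma convex_stripe: "convex (stripe u a \<xi>)"
proof -
  have "stripe u a \<xi> = {x. inner u x \<le> a + \<xi>} \<inter> {x. inner u x \<ge> a - \<xi>}"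
    unfolding stripe_def by auto
  then show ?thesis by (simp add: convex_Int convex_halfspace_le convex_halfspace_ge)
qed

lemma is_metric_proj_pseq:
  fixes Hs :: "'a::{real_inner,complete_space} set list"
  assumes "\<And>i. i < n \<Longrightarrow> closed (Hs ! i) \<and> convex (Hs ! i) \<and> z \<in> Hs ! i" "j < n"
  shows "is_metric_proj (\<Inter>i\<le>j. Hs ! i) (pseq Hs a j) (pseq Hs a (Suc j))"
proof -
  have "closed (\<Inter>i\<le>j. Hs ! i)" "convex (\<Inter>i\<le>j. Hs ! i)" "z \<in> (\<Inter>i\<le>j. Hs ! i)"
    using assms by (auto intro!: closed_INT convex_INT)
  then show ?thesis using is_metric_proj_metric_proj by fastforce
qed

lemma pseq_descent:
  fixes Hs :: "'a::{real_inner,complete_space} set list"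
  assumes sets: "\<And>i. i < n \<Longrightarrow> closed (Hs ! i) \<and> convex (Hs ! i) \<and> z \<in> Hs ! i" and "0 < n"
  shows "(norm (z - pseq Hs a n))\<^sup>2 + (norm (a - pseq Hs a 1))\<^sup>2 \<le> (norm (z - a))\<^sup>2"
proof -
  have proj_step: "(norm (z - pseq Hs a (Suc j)))\<^sup>2 + (norm (pseq Hs a j - pseq Hs a (Suc j)))\<^sup>2
      \<le> (norm (z - pseq Hs a j))\<^sup>2" if "j < n" for j
  proof -
    have "convex (\<Inter>i\<le>j. Hs ! i)" "z \<in> (\<Inter>i\<le>j. Hs ! i)"
      using sets that by (auto intro!: convex_INT)
    with is_metric_proj_pseq[OF sets that] show ?thesis by (rule is_metric_proj_pythagoras_le)
  qed
  have "(norm (z - pseq Hs a j))\<^sup>2 \<le> (norm (z - pseq Hs a 1))\<^sup>2" if "1 \<le> j" "j \<le> n" for j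
    using that
  proof (induction j)
    case (Suc j)
    show ?case
    proof (cases "j = 0")
      case False
      with Suc have "(norm (z - pseq Hs a j))\<^sup>2 \<le> (norm (z - pseq Hs a 1))\<^sup>2" "j < n" by auto
      moreover have "0 \<le> (norm (pseq Hs a j - pseq Hs a (Suc j)))\<^sup>2" by simp
      ultimately show ?thesis using proj_step[of j] by linarith
    qed simp
  qed simp
  then have "(norm (z - pseq Hs a n))\<^sup>2 \<le> (norm (z - pseq Hs a 1))\<^sup>2" using \<open>0 < n\<close> by simp
  moreover have "(norm (z - pseq Hs a 1))\<^sup>2 + (norm (a - pseq Hs a 1))\<^sup>2 \<le> (norm (z - a))\<^sup>2"
    using proj_step[of 0] \<open>0 < n\<close> by simp
  ultimately show ?thesis by linarith
qed

lemma stripe_separation: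
  assumes "p \<in> stripe u \<alpha> \<xi>" "0 < g" "g \<le> inner u a - (\<alpha> + \<xi>)"
  shows "u \<noteq> 0" "(g / norm u)\<^sup>2 \<le> (norm (a - p))\<^sup>2"
proof -
  have "g \<le> inner u (a - p)" using assms(1,3) by (auto simp: stripe_def inner_diff_right)
  also have "\<dots> \<le> norm u * norm (a - p)" by (rule norm_cauchy_schwarz)
  finally have gu: "g \<le> norm u * norm (a - p)" .
  then show "u \<noteq> 0" using assms(2) by auto
  then have "g / norm u \<le> norm (a - p)" using gu by (simp add: divide_le_eq mult.commute)
  then show "(g / norm u)\<^sup>2 \<le> (norm (a - p))\<^sup>2" using assms(2) by (intro power_mono) auto
qed

lemma solution_in_stripe:
  fixes F :: "'a::real_inner \<Rightarrow> 'b::real_inner" and L :: "'a \<Rightarrow>\<^sub>L 'b"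
  assumes adjoint: "\<And>h w. inner (L h) w = inner h (Lt w)"
    and tangential: "norm (F v - F z - L (v - z)) \<le> \<eta> * norm (F v - F z)"
    and "F z = y" "norm (yd - y) \<le> \<delta>" "0 \<le> \<eta>"
  shows "z \<in> stripe (Lt (F v - yd)) (inner (Lt (F v - yd)) v - (norm (F v - yd))\<^sup>2)
                ((\<delta> + \<eta> * (norm (F v - yd) + \<delta>)) * norm (F v - yd))"
proof -
  define r where "r = F v - yd"
  define e where "e = F v - F z - L (v - z)"
  have "inner (Lt r) z - (inner (Lt r) v - (norm r)\<^sup>2) = (norm r)\<^sup>2 - inner (L (v - z)) r"
    using adjoint by (simp add: inner_diff_right inner_commute)
  also have "L (v - z) = r + (yd - y) - e"
    unfolding r_def e_def using \<open>F z = y\<close> by (simp add: blinfun.diff_right)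
  also have "(norm r)\<^sup>2 - inner (r + (yd - y) - e) r = inner e r - inner (yd - y) r"
    by (simp add: inner_diff_left inner_add_left power2_norm_eq_inner)
  finally have eq: "inner (Lt r) z - (inner (Lt r) v - (norm r)\<^sup>2) = inner e r - inner (yd - y) r" .
  have "norm (F v - F z) \<le> norm r + \<delta>"
    using \<open>F z = y\<close> \<open>norm (yd - y) \<le> \<delta>\<close> norm_triangle_ineq[of r "yd - y"] by (simp add: r_def)
  then have ne: "norm e \<le> \<eta> * (norm r + \<delta>)"
    using tangential \<open>0 \<le> \<eta>\<close> unfolding e_def by (meson mult_left_mono order_trans)
  have "\<bar>inner e r - inner (yd - y) r\<bar> \<le> norm e * norm r + norm (yd - y) * norm r"
    using Cauchy_Schwarz_ineq2[of e r] Cauchy_Schwarz_ineq2[of "yd - y" r] by linarith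
  also have "\<dots> \<le> \<eta> * (norm r + \<delta>) * norm r + \<delta> * norm r"
    using ne \<open>norm (yd - y) \<le> \<delta>\<close> by (intro add_mono mult_right_mono) auto
  finally show ?thesis using eq unfolding stripe_def r_def by (simp add: algebra_simps)
qed

lemma rev_sorted_list_of_set_nth_0:
  assumes "finite A" "A \<noteq> {}"
  shows "rev (sorted_list_of_set A) ! 0 = Max A"
proof -
  define xs where "xs = sorted_list_of_set A"
  have xs: "sorted xs" "set xs = A" "xs \<noteq> []" using assms by (auto simp: xs_def)
  have "last xs = Max A"
  proof (rule Max_eqI[symmetric])
    fix m assume "m \<in> A"
    then obtain i where i: "i < length xs" "xs ! i = m" using xs(2) by (metis in_set_conv_nth)
    then have "xs ! i \<le> xs ! (length xs - 1)" using xs(1) by (intro sorted_nth_mono) auto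
    then show "m \<le> last xs" using i xs(3) by (simp add: last_conv_nth)
  qed (use assms xs in auto)
  then show ?thesis using xs(3) by (simp add: xs_def hd_rev[symmetric] hd_conv_nth)
qed

lemma tgss_stripes_nth:
  assumes "finite A" "i < card A"
  shows "tgss_stripes \<delta> \<eta> Fadj F yd x lam A ! i \<in> tgss_H \<delta> \<eta> Fadj F yd x lam ` A"
proof -
  have "i < length (rev (sorted_list_of_set A))" using assms by simp
  from nth_map[OF this] nth_mem[OF this] assms(1) show ?thesis by (auto simp: tgss_stripes_def)
qed

lemma tgss_stripes_nth_closed_convex:
  assumes "finite A" "i < card A" "\<And>m. m \<in> A \<Longrightarrow> z \<in> tgss_H \<delta> \<eta> Fadj F yd x lam m"
  shows "closed (tgss_stripes \<delta> \<eta> Fadj F yd x lam A ! i) \<and> convex (tgss_stripes \<delta> \<eta> Fadj F yd x lam A ! i)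
           \<and> z \<in> tgss_stripes \<delta> \<eta> Fadj F yd x lam A ! i"
proof -
  obtain m where "m \<in> A" "tgss_stripes \<delta> \<eta> Fadj F yd x lam A ! i = tgss_H \<delta> \<eta> Fadj F yd x lam m"
    using tgss_stripes_nth[OF assms(1,2)] by blast
  with assms(3) show ?thesis by (simp add: tgss_H_def closed_stripe convex_stripe)
qed

lemma tgss_stripes_nth_0:
  assumes "finite A" "k \<in> A" "\<forall>m\<in>A. m \<le> k"
  shows "tgss_stripes \<delta> \<eta> Fadj F yd x lam A ! 0 = tgss_H \<delta> \<eta> Fadj F yd x lam k"
proof -
  have "Max A = k" by (rule Max_eqI) (use assms in auto)
  then have "rev (sorted_list_of_set A) ! 0 = k"
    using rev_sorted_list_of_set_nth_0[OF assms(1)] assms(2) by auto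
  moreover have "0 < card A" using assms(1,2) card_gt_0_iff by blast
  ultimately show ?thesis using assms(1) by (simp add: tgss_stripes_def)
qed

lemma solution_in_tgss_H:
  fixes F' :: "'a::real_inner \<Rightarrow> ('a \<Rightarrow>\<^sub>L 'b::real_inner)"
  assumes "\<And>h w. inner (F' (tgss_z x lam m) h) w = inner h (Fadj (tgss_z x lam m) w)"
    and "norm (F (tgss_z x lam m) - F z - F' (tgss_z x lam m) (tgss_z x lam m - z))
           \<le> \<eta> * norm (F (tgss_z x lam m) - F z)"
    and "F z = y" "norm (yd - y) \<le> \<delta>" "0 \<le> \<eta>"
  shows "z \<in> tgss_H \<delta> \<eta> Fadj F yd x lam m"
  using solution_in_stripe[OF assms]
  by (simp add: tgss_H_def tgss_u_def tgss_alpha_def tgss_xi_def tgss_r_def)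

lemma discrepancy_gap_pos:
  fixes t \<delta> \<eta> :: real
  assumes "0 \<le> \<delta>" "0 \<le> \<eta>" "\<eta> < 1" "(1 + \<eta>) / (1 - \<eta>) * \<delta> < t"
  shows "0 < t * (t - \<delta> - \<eta> * (t + \<delta>))"
proof -
  have "(1 + \<eta>) * \<delta> < (1 - \<eta>) * t" using assms by (simp add: field_simps)
  moreover have "0 \<le> (1 + \<eta>) * \<delta>" using assms by simp
  ultimately have "0 < (1 - \<eta>) * t" "0 < t - \<delta> - \<eta> * (t + \<delta>)"
    by (auto simp: algebra_simps)
  then show ?thesis using assms(3) by (simp add: zero_less_mult_iff)
qed

theorem proposition3p6:
  fixes F :: "'a::{real_inner,complete_space} \<Rightarrow> 'b::{real_inner,complete_space}"
    and F' :: "'a \<Rightarrow> ('a \<Rightarrow>\<^sub>L 'b)"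
    and Fadj :: "'a \<Rightarrow> 'b \<Rightarrow> 'a"
    and D :: "'a set"
    and x0 xstar z :: 'a and y yd :: 'b
    and \<rho> \<eta> cF \<delta> :: real
    and K k :: nat
    and lam :: "nat \<Rightarrow> real" and I :: "nat \<Rightarrow> nat set" and x :: "nat \<Rightarrow> 'a"
  assumes rho_pos: "\<rho> > 0"
    and ball_dom: "cball x0 (4 * \<rho>) \<subseteq> D"
    and deriv: "\<forall>v\<in>D. (F has_derivative blinfun_apply (F' v)) (at v within D)"
    and deriv_cont: "continuous_on D F'"
    and adjoint: "\<forall>v\<in>D. \<forall>h w. inner (F' v h) w = inner h (Fadj v w)"
    and A1: "xstar \<in> cball x0 \<rho>" "F xstar = y"
    and eta: "0 < \<eta>" "\<eta> < 1"
    and A2: "\<forall>v\<in>cball x0 (4 * \<rho>). \<forall>w\<in>cball x0 (4 * \<rho>).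
               norm (F v - F w - F' v (v - w)) \<le> \<eta> * norm (F v - F w)"
    and A3: "\<forall>v\<in>cball x0 (4 * \<rho>). 0 < norm (F' v) \<and> norm (F' v) \<le> cF"
    and delta_pos: "\<delta> > 0"
    and data: "norm (yd - y) \<le> \<delta>"
    and K: "K \<ge> 1"
    and lam: "\<forall>j. 0 \<le> lam j \<and> lam j \<le> 1" "lam 0 = 0"
    and Iset: "\<forall>j. finite (I j) \<and> j \<in> I j \<and> I j \<subseteq> {j - K..j}"
    and x_init: "x 0 = x0"
    and x_step: "\<forall>j. x (Suc j) =
       pseq (tgss_stripes \<delta> \<eta> Fadj F yd x lam (I j)) (tgss_z x lam j) (card (I j))"
    and resid: "norm (tgss_r F yd x lam k) > (1 + \<eta>) / (1 - \<eta>) * \<delta>"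
  shows "tgss_z x lam k \<in> halfspace_gt (tgss_u Fadj F yd x lam k)
            (tgss_alpha Fadj F yd x lam k + tgss_xi \<delta> \<eta> F yd x lam k)
       \<and> ((\<forall>i\<in>I k. tgss_z x lam i \<in> cball x0 (4 * \<rho>)) \<and> z \<in> cball x0 (4 * \<rho>) \<and> F z = y
          \<longrightarrow> tgss_u Fadj F yd x lam k \<noteq> 0
            \<and> (\<forall>j < card (I k).
                 is_metric_proj (\<Inter>i\<le>j. tgss_stripes \<delta> \<eta> Fadj F yd x lam (I k) ! i)
                   (pseq (tgss_stripes \<delta> \<eta> Fadj F yd x lam (I k)) (tgss_z x lam k) j)
                   (pseq (tgss_stripes \<delta> \<eta> Fadj F yd x lam (I k)) (tgss_z x lam k) (Suc j)))
            \<and> (norm (z - x (Suc k)))\<^sup>2 \<le> (norm (z - tgss_z x lam k))\<^sup>2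
                - (norm (tgss_r F yd x lam k) * (norm (tgss_r F yd x lam k) - \<delta>
                     - \<eta> * (norm (tgss_r F yd x lam k) + \<delta>)) / norm (tgss_u Fadj F yd x lam k))\<^sup>2)"
proof -
  let ?zk = "tgss_z x lam k" and ?r = "tgss_r F yd x lam k" and ?u = "tgss_u Fadj F yd x lam k"
  let ?Hs = "tgss_stripes \<delta> \<eta> Fadj F yd x lam (I k)"
  define g where "g = norm ?r * (norm ?r - \<delta> - \<eta> * (norm ?r + \<delta>))"
  have gap: "inner ?u ?zk - (tgss_alpha Fadj F yd x lam k + tgss_xi \<delta> \<eta> F yd x lam k) = g"
    by (simp add: g_def tgss_alpha_def tgss_xi_def power2_eq_square algebra_simps)
  have "0 < g" unfolding g_def using discrepancy_gap_pos delta_pos eta resid by simp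
  then have "?zk \<in> halfspace_gt ?u (tgss_alpha Fadj F yd x lam k + tgss_xi \<delta> \<eta> F yd x lam k)"
    using gap by (simp add: halfspace_gt_def)
  moreover
  {
    assume hyp: "\<forall>i\<in>I k. tgss_z x lam i \<in> cball x0 (4 * \<rho>)" "z \<in> cball x0 (4 * \<rho>)" "F z = y"
    have fin: "finite (I k)" and kI: "k \<in> I k" and Ik_le: "\<forall>m\<in>I k. m \<le> k"
      using Iset by (auto dest!: subsetD)
    have zH: "z \<in> tgss_H \<delta> \<eta> Fadj F yd x lam m" if "m \<in> I k" for m
    proof -
      have "tgss_z x lam m \<in> cball x0 (4 * \<rho>)" using hyp that by blast
      with ball_dom show ?thesis
        by (intro solution_in_tgss_H[where F' = F' and y = y]) (use adjoint A2 hyp data eta in auto)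
    qed
    note sets = tgss_stripes_nth_closed_convex[OF fin _ zH]
    have n: "0 < card (I k)" using fin kI card_gt_0_iff by blast
    have H0: "?Hs ! 0 = tgss_H \<delta> \<eta> Fadj F yd x lam k"
      by (rule tgss_stripes_nth_0) (use fin kI Ik_le in auto)
    have "pseq ?Hs ?zk 1 \<in> stripe ?u (tgss_alpha Fadj F yd x lam k) (tgss_xi \<delta> \<eta> F yd x lam k)"
      using is_metric_proj_pseq[OF sets n, of ?zk] H0 by (simp add: is_metric_proj_def tgss_H_def)
    note separation = stripe_separation[OF this \<open>0 < g\<close> gap[symmetric, THEN eq_refl]]
    have "(norm (z - x (Suc k)))\<^sup>2 + (norm (?zk - pseq ?Hs ?zk 1))\<^sup>2 \<le> (norm (z - ?zk))\<^sup>2"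
      using pseq_descent[OF sets n] x_step by simp
    with separation have "?u \<noteq> 0 \<and> (\<forall>j < card (I k). is_metric_proj (\<Inter>i\<le>j. ?Hs ! i) (pseq ?Hs ?zk j) (pseq ?Hs ?zk (Suc j)))
      \<and> (norm (z - x (Suc k)))\<^sup>2 \<le> (norm (z - ?zk))\<^sup>2 - (g / norm ?u)\<^sup>2"
      using is_metric_proj_pseq[OF sets] by auto
  }
  ultimately show ?thesis unfolding g_def by blast
qed

end
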